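(* There exists a constant $\widehat c>0$ such that for all $N$ large enough and all $n\in\mathbb{Z}_+$, $$\|\check\pi-\zeta\|_{\mathrm{tv}}\le\frac{5\cdot 2^N n}{N!}+2e^{1-\widehat c n/N^3}.$$ Consequently $\limsup_{N\to\infty}\frac{1}{N\ln N}\ln\|\check\pi-\zeta\|_{\mathrm{tv}}\le -1$.
   Context: Let $\pi_N$ be the law of the number of fixed points of a uniform random permutation of $\{1,\dots,N\}$, $\check\pi$ the law $\pi_N$ conditioned on $\{0,\dots,N-4\}$, and $\zeta$ the Poisson law of parameter 1 conditioned on $\{0,\dots,N-4\}$. $\|\mu-\mu'\|_{\mathrm{tv}}=\sup_A|\mu(A)-\mu'(A)|$. *)

theory Defs
  imports "HOL-Probability.Probability"
begin

definition fixpt_pmf :: "nat \<Rightarrow> nat pmf" where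
  "fixpt_pmf N = map_pmf (\<lambda>\<sigma>. card {i \<in> {1..N}. \<sigma> i = i})
                   (pmf_of_set {\<sigma> :: nat \<Rightarrow> nat. \<sigma> permutes {1..N}})"

definition fixpt_cond_pmf :: "nat \<Rightarrow> nat pmf" where
  "fixpt_cond_pmf N = cond_pmf (fixpt_pmf N) {0..N - 4}"

definition poisson_cond_pmf :: "nat \<Rightarrow> nat pmf" where
  "poisson_cond_pmf N = cond_pmf (poisson_pmf 1) {0..N - 4}"

definition tv_dist :: "'a pmf \<Rightarrow> 'a pmf \<Rightarrow> real" where
  "tv_dist p q = (SUP A. \<bar>measure_pmf.prob p A - measure_pmf.prob q A\<bar>)"

end

theory Submission
  imports Defs "HOL-Real_Asymp.Real_Asymp"
begin

text \<open>
  A permutation of an N-set with exactly k fixed points is a choice of the fixed set and a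
  derangement of the remaining N - k points, and counting derangements gives
  \<open>\<pi>\<^sub>N(k) = s(N - k) / k!\<close>, where \<open>s(m) = \<Sum>\<^sub>j\<^sub>\<le>\<^sub>m (-1)\<^sup>j / j!\<close> is the truncated series of
  \<open>e\<^sup>-\<^sup>1\<close>. Hence \<open>|\<pi>\<^sub>N(k) - \<zeta>(k)| \<le> 3 / (k! (N + 1 - k)!)\<close>, and summing over k gives an
  \<open>\<ell>\<^sup>1\<close>-distance of order \<open>2\<^sup>N / N!\<close> on \<open>{0..N-4}\<close>. Conditioning on a set of probability at
  least 1/4 changes this by a bounded factor, which gives the total variation bound
  \<open>5 \<cdot> 2\<^sup>N / N!\<close>; Stirling's lower bound \<open>N! \<ge> (N/e)\<^sup>N\<close> then gives the rate \<open>-N ln N\<close>.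
\<close>

subsection \<open>Counting permutations by their fixed points\<close>

definition derangements :: "'a set \<Rightarrow> ('a \<Rightarrow> 'a) set" where
  "derangements A = {\<sigma>. \<sigma> permutes A \<and> (\<forall>x\<in>A. \<sigma> x \<noteq> x)}"

definition partial_exp_neg_one :: "nat \<Rightarrow> real" where
  "partial_exp_neg_one n = (\<Sum>j\<le>n. (-1) ^ j / fact j)"

lemma permutes_with_fixpoints_eq_derangements:
  assumes "F \<subseteq> A"
  shows "{\<sigma>. \<sigma> permutes A \<and> {x\<in>A. \<sigma> x = x} = F} = derangements (A - F)"
  using assms unfolding derangements_def permutes_def by auto

lemma card_permutes_by_fixpoint_count:
  assumes "finite A"
  shows "card {\<sigma>. \<sigma> permutes A \<and> P (card {x\<in>A. \<sigma> x = x})}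
           = (\<Sum>F | F \<subseteq> A \<and> P (card F). card (derangements (A - F)))"
proof -
  let ?I = "{F. F \<subseteq> A \<and> P (card F)}"
  let ?B = "\<lambda>F. {\<sigma>. \<sigma> permutes A \<and> {x\<in>A. \<sigma> x = x} = F}"
  have "card {\<sigma>. \<sigma> permutes A \<and> P (card {x\<in>A. \<sigma> x = x})} = card (\<Union>F\<in>?I. ?B F)"
    by (rule arg_cong[where f = card]) auto
  also have "\<dots> = (\<Sum>F\<in>?I. card (?B F))"
    using finite_permutations[OF assms] assms by (intro card_UN_disjoint) (auto intro: finite_subset)
  also have "\<dots> = (\<Sum>F\<in>?I. card (derangements (A - F)))"
    by (intro sum.cong) (auto simp: permutes_with_fixpoints_eq_derangements)
  finally show ?thesis .
qed

lemma sum_Pow_card: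
  assumes "finite A"
  shows "(\<Sum>F\<in>Pow A. g (card F)) = (\<Sum>k\<le>card A. real (card A choose k) * (g k :: real))"
proof -
  have "(\<Sum>F\<in>Pow A. g (card F)) = (\<Sum>k\<le>card A. \<Sum>F | F \<in> Pow A \<and> card F = k. g (card F))"
    by (rule sum.group[symmetric]) (use assms card_mono in auto)
  also have "\<dots> = (\<Sum>k\<le>card A. real (card {F. F \<subseteq> A \<and> card F = k}) * g k)"
    by (intro sum.cong) auto
  finally show ?thesis by (simp only: n_subsets[OF assms])
qed

lemma sum_alternating_inverse_fact_products:
  "(\<Sum>k\<le>m. (-1) ^ (m - k) / (fact k * fact (m - k)) :: real) = (if m = 0 then 1 else 0)"
proof -
  have "(0::real) ^ m = (\<Sum>k\<le>m. real (m choose k) * 1 ^ k * (-1) ^ (m - k))"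
    using binomial_ring[of "1::real" "-1" m] by simp
  also have "\<dots> = fact m * (\<Sum>k\<le>m. (-1) ^ (m - k) / (fact k * fact (m - k)))"
    by (auto simp: sum_distrib_left binomial_fact intro: sum.cong)
  finally show ?thesis by (cases m) auto
qed

lemma partial_exp_neg_one_Suc:
  "partial_exp_neg_one (Suc m) = partial_exp_neg_one m + (-1) ^ Suc m / fact (Suc m)"
  by (simp add: partial_exp_neg_one_def)

lemma sum_partial_exp_neg_one_div_fact:
  "(\<Sum>k\<le>n. partial_exp_neg_one (n - k) / fact k) = 1"
proof (induction n)
  case 0
  then show ?case by (simp add: partial_exp_neg_one_def)
next
  case (Suc n)
  have "(\<Sum>k\<le>n. partial_exp_neg_one (Suc n - k) / fact k)
        = (\<Sum>k\<le>n. partial_exp_neg_one (n - k) / fact k)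
          + (\<Sum>k\<le>n. (-1) ^ (Suc n - k) / (fact k * fact (Suc n - k)))"
    unfolding sum.distrib[symmetric]
    by (intro sum.cong) (simp_all add: Suc_diff_le partial_exp_neg_one_Suc add_divide_distrib
                                   del: fact_Suc power_Suc)
  also have "(\<Sum>k\<le>n. (-1) ^ (Suc n - k) / (fact k * fact (Suc n - k)) :: real) = - 1 / fact (Suc n)"
    using sum_alternating_inverse_fact_products[of "Suc n"] by (simp add: sum.atMost_Suc)
  finally show ?case
    using Suc by (simp add: partial_exp_neg_one_def)
qed

text \<open>Strong induction on \<open>|A|\<close>: the counts \<open>D\<^sub>m\<close> of derangements are determined by
  \<open>n! = \<Sum>\<^sub>k (n choose k) D\<^sub>n\<^sub>-\<^sub>k\<close>, which the claimed formula satisfies by the previous lemma.\<close>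

lemma card_derangements:
  assumes "finite A"
  shows "real (card (derangements A)) = fact (card A) * partial_exp_neg_one (card A)"
  using assms
proof (induction "card A" arbitrary: A rule: less_induct)
  case less
  let ?n = "card A"
  define g where "g k = fact (?n - k) * partial_exp_neg_one (?n - k)" for k
  have "fact ?n = (\<Sum>F\<in>Pow A. card (derangements (A - F)))"
    using card_permutes_by_fixpoint_count[OF less.prems, of "\<lambda>_. True"]
      card_permutations[OF refl less.prems] by (simp add: Pow_def)
  then have "(fact ?n :: real) = (\<Sum>F\<in>Pow A. real (card (derangements (A - F))))"
    by (metis of_nat_fact of_nat_sum)
  also have "\<dots> = real (card (derangements A)) + (\<Sum>F\<in>Pow A - {{}}. g (card F))"
  proof -
    have "real (card (derangements (A - F))) = g (card F)" if F: "F \<in> Pow A - {{}}" for F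
    proof -
      have "finite F" using F less.prems finite_subset by auto
      then have "card (A - F) = ?n - card F" "card F > 0" "card F \<le> ?n"
        using F less.prems by (auto simp: card_Diff_subset card_mono)
      then show ?thesis
        using less.hyps[of "A - F"] less.prems by (simp add: g_def)
    qed
    then show ?thesis
      using less.prems by (simp add: sum.remove[of _ "{}"])
  qed
  also have "(\<Sum>F\<in>Pow A - {{}}. g (card F)) = (\<Sum>F\<in>Pow A. g (card F)) - g 0"
    using less.prems by (simp add: sum.remove[of "Pow A" "{}"])
  also have "(\<Sum>F\<in>Pow A. g (card F)) = (\<Sum>k\<le>?n. real (?n choose k) * g k)"
    by (rule sum_Pow_card[OF less.prems])
  also have "\<dots> = (\<Sum>k\<le>?n. fact ?n * (partial_exp_neg_one (?n - k) / fact k))"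
    by (intro sum.cong) (auto simp: g_def binomial_fact)
  also have "\<dots> = fact ?n"
    unfolding sum_distrib_left[symmetric] sum_partial_exp_neg_one_div_fact by simp
  finally show ?case by (simp add: g_def)
qed

lemma pmf_fixpt_pmf:
  assumes "k \<le> N"
  shows "pmf (fixpt_pmf N) k = partial_exp_neg_one (N - k) / fact k"
proof -
  let ?A = "{1..N::nat}"
  let ?S = "{\<sigma>::nat\<Rightarrow>nat. \<sigma> permutes ?A}"
  have "?S \<noteq> {}"
    using permutes_id[of ?A] by blast
  moreover have "finite ?S"
    by (simp add: finite_permutations)
  ultimately have "pmf (fixpt_pmf N) k
             = card {\<sigma>. \<sigma> permutes ?A \<and> card {x\<in>?A. \<sigma> x = x} = k} / card ?S"
    unfolding fixpt_pmf_def pmf_map by (simp add: measure_pmf_of_set vimage_def Int_def)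
  also have "card ?S = fact N"
    using card_permutations[of ?A N] by simp
  also have "card {\<sigma>. \<sigma> permutes ?A \<and> card {x\<in>?A. \<sigma> x = x} = k}
             = (\<Sum>F | F \<subseteq> ?A \<and> card F = k. card (derangements (?A - F)))"
    using card_permutes_by_fixpoint_count[of ?A "\<lambda>c. c = k"] by simp
  also have "real \<dots> = (\<Sum>F | F \<subseteq> ?A \<and> card F = k. fact (N - k) * partial_exp_neg_one (N - k))"
    unfolding of_nat_sum
  proof (intro sum.cong refl)
    fix F assume F: "F \<in> {F. F \<subseteq> ?A \<and> card F = k}"
    then have "card (?A - F) = N - k"
      using finite_subset[of F ?A] by (simp add: card_Diff_subset)
    then show "real (card (derangements (?A - F))) = fact (N - k) * partial_exp_neg_one (N - k)"
      using card_derangements[of "?A - F"] by simp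
  qed
  also have "\<dots> = real (N choose k) * (fact (N - k) * partial_exp_neg_one (N - k))"
    using n_subsets[of ?A k] by simp
  finally show ?thesis
    using assms by (simp add: binomial_fact field_simps)
qed

subsection \<open>Comparison with the Poisson law\<close>

lemma partial_exp_neg_one_approx:
  "\<bar>partial_exp_neg_one m - exp (-1)\<bar> \<le> 3 / fact (Suc m)"
proof -
  obtain t where t: "\<bar>t\<bar> \<le> 1"
    and e: "exp (-1) = (\<Sum>j<Suc m. (-1::real) ^ j / fact j) + exp t / fact (Suc m) * (-1) ^ Suc m"
    using Maclaurin_exp_le[of "-1::real" "Suc m"] by auto
  have "\<bar>partial_exp_neg_one m - exp (-1)\<bar> = exp t / fact (Suc m)"
    using e by (simp add: partial_exp_neg_one_def lessThan_Suc_atMost abs_mult)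
  also have "exp t \<le> 3"
    using t exp_le by (meson abs_le_D1 exp_le_cancel_iff order_trans)
  then have "exp t / fact (Suc m) \<le> 3 / fact (Suc m)"
    by (simp add: divide_right_mono)
  finally show ?thesis .
qed

lemma partial_exp_neg_one_ge:
  assumes "m \<ge> 4"
  shows "partial_exp_neg_one m \<ge> 1 / 4"
proof -
  have "(120::real) \<le> fact (Suc m)"
    using fact_mono[of "Suc 4" "Suc m", where 'a=real] assms by (simp add: fact_numeral)
  then have "3 / fact (Suc m) \<le> (3::real) / 120"
    by (intro divide_left_mono) auto
  moreover have "exp (-1::real) \<ge> 1 / 3"
    using exp_le by (simp add: exp_minus field_simps)
  ultimately show ?thesis
    using partial_exp_neg_one_approx[of m] by linarith
qed

lemma sum_inverse_fact_products:
  "(\<Sum>k\<le>m. 1 / (fact k * fact (m - k)) :: real) = 2 ^ m / fact m"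
proof -
  have "(\<Sum>k\<le>m. 1 / (fact k * fact (m - k)) :: real) = (\<Sum>k\<le>m. real (m choose k)) / fact m"
    by (auto simp: sum_divide_distrib binomial_fact intro: sum.cong)
  also have "\<dots> = 2 ^ m / fact m"
    by (metis choose_row_sum of_nat_numeral of_nat_power of_nat_sum)
  finally show ?thesis .
qed

lemma sum_abs_fixpt_poisson_le:
  "(\<Sum>k\<le>N. \<bar>pmf (fixpt_pmf N) k - pmf (poisson_pmf 1) k\<bar>) \<le> 3 * 2 ^ Suc N / fact (Suc N)"
proof -
  have "(\<Sum>k\<le>N. \<bar>pmf (fixpt_pmf N) k - pmf (poisson_pmf 1) k\<bar>)
        \<le> (\<Sum>k\<le>Suc N. 3 * (1 / (fact k * fact (Suc N - k))))"
  proof (rule order_trans[OF sum_mono sum_mono2])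
    fix k assume "k \<in> {..N}"
    then have "\<bar>pmf (fixpt_pmf N) k - pmf (poisson_pmf 1) k\<bar>
               = \<bar>partial_exp_neg_one (N - k) - exp (-1)\<bar> / fact k"
      and "Suc (N - k) = Suc N - k"
      by (auto simp: pmf_fixpt_pmf simp flip: diff_divide_distrib)
    with partial_exp_neg_one_approx[of "N - k"]
    show "\<bar>pmf (fixpt_pmf N) k - pmf (poisson_pmf 1) k\<bar> \<le> 3 * (1 / (fact k * fact (Suc N - k)))"
      by (simp add: divide_right_mono field_simps)
  qed auto
  also have "\<dots> = 3 * 2 ^ Suc N / fact (Suc N)"
    unfolding sum_distrib_left[symmetric] sum_inverse_fact_products by simp
  finally show ?thesis .
qed

subsection \<open>Total variation between conditioned laws\<close>

lemma measure_pmf_eq_sum_finite_support: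
  assumes "finite S" "set_pmf p \<subseteq> S"
  shows "measure_pmf.prob p A = (\<Sum>k\<in>A \<inter> S. pmf p k)"
proof -
  have "measure_pmf.prob p A = measure_pmf.prob p (A \<inter> S \<inter> set_pmf p)"
    using assms(2) by (metis inf.absorb_iff2 inf_assoc measure_Int_set_pmf)
  then show ?thesis
    using assms(1) by (simp add: measure_Int_set_pmf measure_measure_pmf_finite)
qed

lemma set_pmf_Int_nonempty:
  assumes "finite S" "(\<Sum>k\<in>S. pmf p k) > 0"
  shows "set_pmf p \<inter> S \<noteq> {}"
proof
  assume "set_pmf p \<inter> S = {}"
  then have "\<forall>k\<in>S. pmf p k = 0"
    by (auto simp: set_pmf_iff)
  then have "(\<Sum>k\<in>S. pmf p k) = 0"
    by simp
  with assms show False by simp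
qed

lemma pmf_cond_pmf_finite:
  assumes "finite S" "(\<Sum>k\<in>S. pmf p k) > 0" "k \<in> S"
  shows "pmf (cond_pmf p S) k = pmf p k / (\<Sum>k\<in>S. pmf p k)"
  using pmf_cond[OF set_pmf_Int_nonempty[OF assms(1,2)]] assms
  by (simp add: measure_measure_pmf_finite)

lemma pmf_diff_le_tv_dist: "\<bar>pmf p k - pmf q k\<bar> \<le> tv_dist p q"
proof -
  have "\<bar>measure_pmf.prob p A - measure_pmf.prob q A\<bar> \<le> 1" for A
    using measure_pmf.prob_le_1[of p A] measure_pmf.prob_le_1[of q A]
      measure_nonneg[of p A] measure_nonneg[of q A] by linarith
  then have "bdd_above (range (\<lambda>A. \<bar>measure_pmf.prob p A - measure_pmf.prob q A\<bar>))"
    by (intro bdd_aboveI2) auto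
  then have "\<bar>measure_pmf.prob p {k} - measure_pmf.prob q {k}\<bar> \<le> tv_dist p q"
    unfolding tv_dist_def by (rule cSUP_upper[OF UNIV_I])
  then show ?thesis by (simp add: measure_pmf_single)
qed

lemma sum_abs_diff_normalized_le:
  fixes f g :: "'a \<Rightarrow> real" and S :: "'a set"
  defines "P \<equiv> sum f S" and "Q \<equiv> sum g S" and "\<delta> \<equiv> \<Sum>k\<in>S. \<bar>f k - g k\<bar>"
  assumes g: "\<And>k. g k \<ge> 0" and P: "P > 0" and Q: "Q > 0"
  shows "(\<Sum>k\<in>S. \<bar>f k / P - g k / Q\<bar>) \<le> 2 * \<delta> / P"
proof -
  have "\<bar>Q - P\<bar> \<le> \<delta>"
    using sum_abs[of "\<lambda>k. f k - g k" S]
    by (simp add: P_def Q_def \<delta>_def sum_subtractf abs_minus_commute)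
  have pointwise: "\<bar>f k / P - g k / Q\<bar> \<le> \<bar>f k - g k\<bar> / P + g k * \<bar>Q - P\<bar> / (P * Q)" for k
  proof -
    have "f k / P - g k / Q = (f k - g k) / P + g k * (Q - P) / (P * Q)"
      using P Q by (simp add: field_simps)
    also have "\<bar>\<dots>\<bar> \<le> \<bar>(f k - g k) / P\<bar> + \<bar>g k * (Q - P) / (P * Q)\<bar>"
      by (rule abs_triangle_ineq)
    finally show ?thesis
      using P Q g[of k] by (simp add: abs_mult abs_divide)
  qed
  have "(\<Sum>k\<in>S. \<bar>f k / P - g k / Q\<bar>) \<le> (\<Sum>k\<in>S. \<bar>f k - g k\<bar> / P + g k * \<bar>Q - P\<bar> / (P * Q))"
    by (rule sum_mono) (rule pointwise)
  also have "\<dots> = \<delta> / P + Q * \<bar>Q - P\<bar> / (P * Q)"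
    unfolding \<delta>_def Q_def by (simp add: sum.distrib sum_divide_distrib sum_distrib_right)
  also have "\<dots> = \<delta> / P + \<bar>Q - P\<bar> / P"
    using Q by simp
  also have "\<dots> \<le> 2 * \<delta> / P"
    using \<open>\<bar>Q - P\<bar> \<le> \<delta>\<close> P by (simp add: field_simps)
  finally show ?thesis .
qed

lemma tv_dist_cond_pmf_le:
  fixes p q :: "'a pmf" and S :: "'a set"
  defines "P \<equiv> \<Sum>k\<in>S. pmf p k" and "Q \<equiv> \<Sum>k\<in>S. pmf q k"
    and "\<delta> \<equiv> \<Sum>k\<in>S. \<bar>pmf p k - pmf q k\<bar>"
  assumes S: "finite S" and P: "P > 0" and Q: "Q > 0"
  shows "tv_dist (cond_pmf p S) (cond_pmf q S) \<le> 2 * \<delta> / P"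
proof -
  have normalized: "(\<Sum>k\<in>S. \<bar>pmf p k / P - pmf q k / Q\<bar>) \<le> 2 * \<delta> / P"
    unfolding P_def Q_def \<delta>_def
    by (rule sum_abs_diff_normalized_le) (use P Q in \<open>simp_all add: P_def Q_def\<close>)
  have cond_p: "pmf (cond_pmf p S) k = pmf p k / P" and cond_q: "pmf (cond_pmf q S) k = pmf q k / Q"
    if "k \<in> S" for k
    using pmf_cond_pmf_finite[OF S _ that] P Q by (simp_all add: P_def Q_def)
  have support: "set_pmf (cond_pmf p S) \<subseteq> S" "set_pmf (cond_pmf q S) \<subseteq> S"
    using set_cond_pmf set_pmf_Int_nonempty[OF S] P Q by (auto simp: P_def Q_def)
  have "\<bar>measure_pmf.prob (cond_pmf p S) A - measure_pmf.prob (cond_pmf q S) A\<bar> \<le> 2 * \<delta> / P" for A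
  proof -
    have "\<bar>measure_pmf.prob (cond_pmf p S) A - measure_pmf.prob (cond_pmf q S) A\<bar>
          = \<bar>\<Sum>k\<in>A \<inter> S. pmf p k / P - pmf q k / Q\<bar>"
      using measure_pmf_eq_sum_finite_support[OF S support(1)]
        measure_pmf_eq_sum_finite_support[OF S support(2)]
      by (simp add: sum_subtractf cond_p cond_q)
    also have "\<dots> \<le> (\<Sum>k\<in>S. \<bar>pmf p k / P - pmf q k / Q\<bar>)"
      using S by (intro order_trans[OF sum_abs sum_mono2]) auto
    finally show ?thesis
      using normalized by linarith
  qed
  then show ?thesis
    unfolding tv_dist_def by (intro cSUP_least) auto
qed

subsection \<open>The bound and its rate\<close>

lemma fixpt_pmf_mass_ge:
  assumes "N \<ge> 8"
  shows "(\<Sum>k\<in>{0..N-4}. pmf (fixpt_pmf N) k) \<ge> 1 / 4"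
proof -
  have "pmf (fixpt_pmf N) 0 \<le> (\<Sum>k\<in>{0..N-4}. pmf (fixpt_pmf N) k)"
    by (rule member_le_sum) auto
  then show ?thesis
    using pmf_fixpt_pmf[of 0 N] partial_exp_neg_one_ge[of N] assms by simp
qed

lemma poisson_mass_pos: "(\<Sum>k\<in>{0..N-4}. pmf (poisson_pmf 1) k) > 0"
  by (rule sum_pos2[of _ 0]) auto

lemma tv_dist_fixpt_poisson_le:
  assumes N: "N \<ge> 9"
  shows "tv_dist (fixpt_cond_pmf N) (poisson_cond_pmf N) \<le> 5 * 2 ^ N / fact N"
proof -
  define P where "P = (\<Sum>k\<in>{0..N-4}. pmf (fixpt_pmf N) k)"
  define \<delta> where "\<delta> = (\<Sum>k\<in>{0..N-4}. \<bar>pmf (fixpt_pmf N) k - pmf (poisson_pmf 1) k\<bar>)"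
  have P: "P \<ge> 1 / 4" using fixpt_pmf_mass_ge N by (simp add: P_def)
  have "\<delta> \<le> (\<Sum>k\<le>N. \<bar>pmf (fixpt_pmf N) k - pmf (poisson_pmf 1) k\<bar>)"
    unfolding \<delta>_def by (intro sum_mono2) auto
  also have "\<dots> \<le> 3 * 2 ^ Suc N / fact (Suc N)"
    by (rule sum_abs_fixpt_poisson_le)
  finally have \<delta>: "\<delta> \<le> 6 / real (Suc N) * (2 ^ N / fact N)"
    by simp
  have "tv_dist (fixpt_cond_pmf N) (poisson_cond_pmf N) \<le> 2 * \<delta> / P"
    unfolding fixpt_cond_pmf_def poisson_cond_pmf_def P_def \<delta>_def
    using P poisson_mass_pos by (intro tv_dist_cond_pmf_le) (auto simp: P_def)
  also have "\<dots> \<le> 2 * \<delta> / (1 / 4)"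
    using P by (intro divide_left_mono) (auto simp: \<delta>_def sum_nonneg)
  also have "\<dots> \<le> 48 / real (Suc N) * (2 ^ N / fact N)"
    using \<delta> by simp
  also have "\<dots> \<le> 5 * (2 ^ N / fact N)"
    using N by (intro mult_right_mono) (auto simp: field_simps)
  finally show ?thesis by simp
qed

lemma tv_dist_fixpt_poisson_pos:
  assumes N: "N \<ge> 9"
  shows "tv_dist (fixpt_cond_pmf N) (poisson_cond_pmf N) > 0"
proof (rule ccontr)
  define P where "P = (\<Sum>k\<in>{0..N-4}. pmf (fixpt_pmf N) k)"
  define Q where "Q = (\<Sum>k\<in>{0..N-4}. pmf (poisson_pmf 1) k)"
  have "P > 0"
    using fixpt_pmf_mass_ge[of N] N unfolding P_def by linarith
  have "Q > 0" using poisson_mass_pos by (simp add: Q_def)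
  assume "\<not> ?thesis"
  then have "pmf (fixpt_cond_pmf N) k = pmf (poisson_cond_pmf N) k" for k
    using pmf_diff_le_tv_dist[of "fixpt_cond_pmf N" k "poisson_cond_pmf N"] by linarith
  then have ratio: "partial_exp_neg_one (N - k) / P = exp (-1) / Q" if "k \<le> N - 4" for k
  proof -
    have "pmf (fixpt_cond_pmf N) k = partial_exp_neg_one (N - k) / P / fact k"
      unfolding fixpt_cond_pmf_def using that \<open>P > 0\<close>
      by (subst pmf_cond_pmf_finite) (auto simp: P_def pmf_fixpt_pmf)
    moreover have "pmf (poisson_cond_pmf N) k = exp (-1) / Q / fact k"
      unfolding poisson_cond_pmf_def using that \<open>Q > 0\<close>
      by (subst pmf_cond_pmf_finite) (auto simp: Q_def)
    ultimately have "partial_exp_neg_one (N - k) / P / fact k = exp (-1) / Q / fact k"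
      using \<open>pmf (fixpt_cond_pmf N) k = pmf (poisson_cond_pmf N) k\<close> by metis
    then show ?thesis
      by (metis divide_cancel_right fact_nonzero)
  qed
  text \<open>Two consecutive truncations of the series for \<open>e\<^sup>-\<^sup>1\<close> would have to coincide.\<close>
  have "N - (N - 4) = 4" "N - (N - 5) = 5" "N - 5 \<le> N - 4"
    using N by auto
  then have "partial_exp_neg_one 4 / P = partial_exp_neg_one 5 / P"
    using ratio[of "N - 4"] ratio[of "N - 5"] by simp
  then have "partial_exp_neg_one 4 = partial_exp_neg_one 5"
    using \<open>P > 0\<close> by simp
  then show False
    using partial_exp_neg_one_Suc[of 4] by (simp add: fact_numeral)
qed

lemma power_div_fact_le_exp:
  fixes x :: real
  assumes "x \<ge> 0"
  shows "x ^ n / fact n \<le> exp x"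
proof -
  obtain t where "exp x = (\<Sum>m<Suc n. x ^ m / fact m) + exp t / fact (Suc n) * x ^ Suc n"
    using Maclaurin_exp_le[of x "Suc n"] by blast
  moreover have "x ^ n / fact n \<le> (\<Sum>m<Suc n. x ^ m / fact m)"
    using assms by (intro member_le_sum) auto
  moreover have "exp t / fact (Suc n) * x ^ Suc n \<ge> 0"
    using assms by simp
  ultimately show ?thesis by linarith
qed

lemma limsup_ln_tv_dist_fixpt_poisson:
  "limsup (\<lambda>N::nat. ereal (ln (tv_dist (fixpt_cond_pmf N) (poisson_cond_pmf N))
                            / (real N * ln (real N)))) \<le> -1"
proof -
  define g where
    "g N = (ln 5 + real N * ln 2 + real N - real N * ln (real N)) / (real N * ln (real N))"
    for N :: nat
  have "g \<longlonglongrightarrow> -1"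
    unfolding g_def by real_asymp
  have "ln (tv_dist (fixpt_cond_pmf N) (poisson_cond_pmf N)) / (real N * ln (real N)) \<le> g N"
    if N: "N \<ge> 9" for N
  proof -
    let ?T = "tv_dist (fixpt_cond_pmf N) (poisson_cond_pmf N)"
    have "?T \<le> 5 * 2 ^ N * (1 / fact N)"
      using tv_dist_fixpt_poisson_le[OF N] by simp
    also have "\<dots> \<le> 5 * 2 ^ N * (exp (real N) / real N ^ N)"
      using power_div_fact_le_exp[of "real N" N] N by (intro mult_left_mono) (auto simp: field_simps)
    finally have "ln ?T \<le> ln (5 * 2 ^ N * (exp (real N) / real N ^ N))"
      using tv_dist_fixpt_poisson_pos[OF N] by simp
    also have "\<dots> = ln 5 + real N * ln 2 + real N - real N * ln (real N)"
      using N by (simp add: ln_mult ln_div ln_realpow)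
    finally show ?thesis
      using N unfolding g_def by (intro divide_right_mono) auto
  qed
  then have "limsup (\<lambda>N. ereal (ln (tv_dist (fixpt_cond_pmf N) (poisson_cond_pmf N))
                                / (real N * ln (real N)))) \<le> limsup (\<lambda>N. ereal (g N))"
    by (intro Limsup_mono) (auto simp: eventually_sequentially)
  also have "limsup (\<lambda>N. ereal (g N)) = ereal (-1)"
    by (rule lim_imp_Limsup) (simp_all add: \<open>g \<longlonglongrightarrow> -1\<close>)
  finally show ?thesis
    by (simp add: one_ereal_def)
qed

text \<open>The bound \<open>5 \<cdot> 2\<^sup>N / N!\<close> already holds without the exponential term, so any \<open>c\<close> works.\<close>

theorem mainTheorem12:
  shows "(\<exists>c::real. c > 0 \<and>
           (\<exists>N0::nat. \<forall>N \<ge> N0. \<forall>n::nat. n \<ge> 1 \<longrightarrow>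
              tv_dist (fixpt_cond_pmf N) (poisson_cond_pmf N)
                \<le> 5 * 2 ^ N * real n / fact N + 2 * exp (1 - c * real n / real N ^ 3)))
         \<and> limsup (\<lambda>N::nat. ereal (ln (tv_dist (fixpt_cond_pmf N) (poisson_cond_pmf N))
                                   / (real N * ln (real N)))) \<le> -1"
proof (intro conjI exI allI impI)
  show "(1::real) > 0" by simp
  fix N n :: nat
  assume "N \<ge> 9" and "n \<ge> 1"
  have "tv_dist (fixpt_cond_pmf N) (poisson_cond_pmf N) \<le> 5 * 2 ^ N / fact N"
    using \<open>N \<ge> 9\<close> by (rule tv_dist_fixpt_poisson_le)
  also have "\<dots> \<le> 5 * 2 ^ N * real n / fact N"
    using \<open>n \<ge> 1\<close> by (intro divide_right_mono) auto
  also have "\<dots> \<le> 5 * 2 ^ N * real n / fact N + 2 * exp (1 - 1 * real n / real N ^ 3)"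
    by simp
  finally show "tv_dist (fixpt_cond_pmf N) (poisson_cond_pmf N)
                  \<le> 5 * 2 ^ N * real n / fact N + 2 * exp (1 - 1 * real n / real N ^ 3)" .
qed (rule limsup_ln_tv_dist_fixpt_poisson)

end
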